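(* Let $n\ge 1$ and $s\in\{1,\dots,n\}$ be integers and let $C\in\mathbb{R}^{n\times n}$ be symmetric positive definite. Define $z^*=\max\{\log\det(C_{S,S}) : S\subseteq\{1,\dots,n\},\ |S|=s\}$. Then for every $t$ with $0\le t\le\lambda_{\min}(C)$, $$z^*=\max\Big\{\Phi_s\big(M_t(x);t\big) : x\in\{0,1\}^n,\ \textstyle\sum_{i=1}^n x_i=s\Big\}.$$
   Context: $\log$ is the natural logarithm, $C_{S,S}$ is the principal submatrix of $C$ with rows and columns indexed by $S$, and $\lambda_{\min}(C)$ is the smallest eigenvalue of $C$. For $0\le t\le\lambda_{\min}(C)$ the matrix $C-tI$ is positive semidefinite; let $A(t)\in\mathbb{R}^{n\times n}$ be a Cholesky factor of it, i.e. $C-tI=A(t)^\top A(t)$, and let $a_i(t)\in\mathbb{R}^n$ be the $i$-th column of $A(t)$. For $x\in[0,1]^n$ put $M_t(x)=\sum_{i=1}^n x_i\,a_i(t)a_i(t)^\top$. For a symmetric matrix $X$, $\lambda_1(X)\ge\dots\ge\lambda_n(X)$ are its eigenvalues. For a positive semidefinite $X$ and $t\ge 0$, $\Phi_s(X;t)=\sum_{i=1}^s\log(\lambda_i(X)+t)$. *)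

theory Defs
  imports "Jordan_Normal_Form.Matrix" "Jordan_Normal_Form.Char_Poly" "Jordan_Normal_Form.DL_Submatrix"
begin

text \<open>Real n x n matrices use the Jordan_Normal_Form type real mat; rows/columns are indexed by 0..n-1.\<close>

definition sym_mat :: "real mat \<Rightarrow> bool" where
  "sym_mat C \<longleftrightarrow> C\<^sup>T = C"

definition pos_def_mat :: "nat \<Rightarrow> real mat \<Rightarrow> bool" where
  "pos_def_mat n C \<longleftrightarrow> C \<in> carrier_mat n n \<and> sym_mat C \<and>
     (\<forall>v \<in> carrier_vec n. v \<noteq> 0\<^sub>v n \<longrightarrow> v \<bullet> (C *\<^sub>v v) > 0)"

text \<open>Eigenvalues (with algebraic multiplicity) of a real matrix whose characteristic
  polynomial splits over the reals (e.g. symmetric matrices), listed in non-increasing order: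
  eigs X ! 0 \<ge> eigs X ! 1 \<ge> ... .\<close>
definition eigs :: "real mat \<Rightarrow> real list" where
  "eigs X = (SOME xs. length xs = dim_row X \<and> sorted (rev xs) \<and>
      char_poly X = (\<Prod>a\<leftarrow>xs. [:- a, 1:]))"

definition lambda_min :: "real mat \<Rightarrow> real" where
  "lambda_min X = last (eigs X)"

definition cholesky_factor :: "nat \<Rightarrow> real mat \<Rightarrow> real mat \<Rightarrow> bool" where
  "cholesky_factor n P A \<longleftrightarrow> A \<in> carrier_mat n n \<and> upper_triangular A \<and>
     (\<forall>i<n. A $$ (i,i) \<ge> 0) \<and> P = A\<^sup>T * A"

text \<open>M_t(x) = sum_i x_i a_i a_i^T where a_i is the i-th column of A (entrywise).\<close>
definition Mmat :: "nat \<Rightarrow> real mat \<Rightarrow> real vec \<Rightarrow> real mat" where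
  "Mmat n A x = mat n n (\<lambda>(j,k). \<Sum>i<n. x $ i * (col A i $ j) * (col A i $ k))"

definition Phi :: "nat \<Rightarrow> real mat \<Rightarrow> real \<Rightarrow> real" where
  "Phi s X t = (\<Sum>i<s. ln (eigs X ! i + t))"

end

theory Submission
  imports Defs
begin

text \<open>
  Let \<open>x\<close> be the indicator vector of \<open>S\<close>, \<open>|S| = s\<close>, and let \<open>N\<close> be the \<open>n \<times> s\<close> matrix of the
  columns \<open>a\<^sub>i(t)\<close>, \<open>i \<in> S\<close>. Then \<open>M\<^sub>t(x) = N N\<^sup>T\<close> and \<open>N\<^sup>T N = (A\<^sup>T A)\<^sub>S\<^sub>S = C\<^sub>S\<^sub>S - t I\<close>.
  The characteristic polynomials of \<open>N N\<^sup>T\<close> and \<open>N\<^sup>T N\<close> differ by the factor \<open>X\<^sup>n\<^sup>-\<^sup>s\<close>, and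
  \<open>N\<^sup>T N\<close> is positive semidefinite, so the \<open>s\<close> largest eigenvalues of \<open>M\<^sub>t(x)\<close> are the
  eigenvalues \<open>\<mu>\<^sub>i\<close> of \<open>C\<^sub>S\<^sub>S - t I\<close>. Hence \<open>\<Phi>\<^sub>s(M\<^sub>t(x); t) = \<Sum> log (\<mu>\<^sub>i + t) = log det C\<^sub>S\<^sub>S\<close>
  (all \<open>\<mu>\<^sub>i + t > 0\<close> because \<open>C\<^sub>S\<^sub>S\<close> is positive definite), so the two sets being maximised
  coincide.
\<close>

lemma proots_prod_linear_factors:
  fixes xs :: "'a :: idom list"
  shows "proots (\<Prod>a\<leftarrow>xs. [:- a, 1:]) = mset xs"
proof (induction xs)
  case (Cons a xs)
  have "(\<Prod>b\<leftarrow>a # xs. [:- b, 1:]) = [:- a, 1:] * (\<Prod>b\<leftarrow>xs. [:- b, 1:])"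
    by simp
  also have "proots \<dots> = {#a#} + mset xs"
    using Cons.IH proots_linear_factor[of "- a"]
    by (subst proots_mult) (auto simp: prod_list_zero_iff)
  finally show ?case by simp
qed simp

lemma eigs_eqI:
  assumes "length xs = dim_row X" and "sorted (rev xs)"
    and "char_poly X = (\<Prod>a\<leftarrow>xs. [:- a, 1:])"
  shows "eigs X = xs"
proof -
  let ?P = "\<lambda>ys. length ys = dim_row X \<and> sorted (rev ys)
    \<and> char_poly X = (\<Prod>a\<leftarrow>ys. [:- a, 1:])"
  have P: "?P (eigs X)"
    unfolding eigs_def by (rule someI[of ?P]) (use assms in blast)
  then have "mset (rev (eigs X)) = mset (rev xs)"
    using assms(3) proots_prod_linear_factors[of xs] proots_prod_linear_factors[of "eigs X"] by simp
  then have "rev (eigs X) = rev xs"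
    using P assms(2) by (metis properties_for_sort)
  then show ?thesis by simp
qed

lemma sym_mat_eigenvalue_real:
  fixes M :: "real mat"
  assumes M: "M \<in> carrier_mat n n" and sym: "sym_mat M"
    and ev: "eigenvalue (map_mat complex_of_real M) a"
  shows "a \<in> \<real>"
proof -
  let ?Mc = "map_mat complex_of_real M"
  obtain v where v: "v \<in> carrier_vec n" "v \<noteq> 0\<^sub>v n" and Mv: "?Mc *\<^sub>v v = a \<cdot>\<^sub>v v"
    using ev M unfolding eigenvalue_def eigenvector_def by auto
  have Mc: "?Mc \<in> carrier_mat n n" and symc: "?Mc\<^sup>T = ?Mc"
    using M sym unfolding sym_mat_def by (auto simp: map_mat_transpose)
  have conj_Mv: "conjugate (?Mc *\<^sub>v v) = ?Mc *\<^sub>v conjugate v"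
  proof (rule eq_vecI)
    fix i assume "i < dim_vec (?Mc *\<^sub>v conjugate v)"
    then have i: "i < n" using M by simp
    have "conjugate (row ?Mc i) = row ?Mc i"
      using i M by (intro eq_vecI) auto
    then show "conjugate (?Mc *\<^sub>v v) $ i = (?Mc *\<^sub>v conjugate v) $ i"
      using i M v conjugate_sprod_vec[of "row ?Mc i" n v] by simp
  qed (use M in simp)
  have "a * (v \<bullet>c v) = (?Mc *\<^sub>v v) \<bullet>c v"
    using v by (simp add: Mv)
  also have "\<dots> = v \<bullet> (?Mc *\<^sub>v conjugate v)"
    using transpose_vec_mult_scalar[OF Mc, of "conjugate v" v] symc v by simp
  also have "\<dots> = v \<bullet>c (?Mc *\<^sub>v v)"
    by (simp add: conj_Mv)
  also have "\<dots> = cnj a * (v \<bullet>c v)"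
    using v by (simp add: Mv conjugate_smult_vec)
  finally have "a = cnj a"
    using v by simp
  then show ?thesis by (metis Reals_cnj_iff)
qed

lemma sym_mat_char_poly_splits:
  fixes M :: "real mat"
  assumes M: "M \<in> carrier_mat n n" and sym: "sym_mat M"
  obtains xs where "length xs = n" and "char_poly M = (\<Prod>a\<leftarrow>xs. [:- a, 1:])"
proof -
  let ?Mc = "map_mat complex_of_real M"
  have Mc: "?Mc \<in> carrier_mat n n" using M by simp
  obtain as where as: "char_poly ?Mc = (\<Prod>a\<leftarrow>as. [:- a, 1:])" "length as = n"
    using char_poly_factorized[OF Mc] by blast
  have real_as: "a \<in> \<real>" if "a \<in> set as" for a
  proof (rule sym_mat_eigenvalue_real[OF M sym])
    show "eigenvalue ?Mc a"
      using that eigenvalue_root_char_poly[OF Mc] by (auto simp: as(1) poly_prod_list prod_list_zero_iff)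
  qed
  define rs where "rs = map Re as"
  then have as_real: "as = map complex_of_real rs"
    using real_as by (induction as arbitrary: rs) (auto simp: complex_is_Real_iff complex_eq_iff)
  interpret p: map_poly_inj_comm_ring_hom complex_of_real ..
  have "map_poly complex_of_real (char_poly M) = map_poly complex_of_real (\<Prod>a\<leftarrow>rs. [:- a, 1:])"
  proof -
    have "char_poly ?Mc = map_poly complex_of_real (char_poly M)"
      by (rule of_real_hom.char_poly_hom[OF M])
    then show ?thesis
      using as(1) unfolding as_real by (simp add: p.hom_prod_list o_def)
  qed
  then have "char_poly M = (\<Prod>a\<leftarrow>rs. [:- a, 1:])"
    by (rule p.injectivity)
  with as(2) show thesis by (intro that[of rs]) (simp_all add: rs_def)
qed

lemma eigs_sym_mat:
  assumes M: "M \<in> carrier_mat n n" and sym: "sym_mat M"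
  shows "length (eigs M) = n" and "sorted (rev (eigs M))"
    and "char_poly M = (\<Prod>a\<leftarrow>eigs M. [:- a, 1:])"
proof -
  obtain xs where xs: "length xs = n" "char_poly M = (\<Prod>a\<leftarrow>xs. [:- a, 1:])"
    using sym_mat_char_poly_splits[OF M sym] .
  have perm: "(\<Prod>a\<leftarrow>rev (sort xs). [:- a, 1:]) = (\<Prod>a\<leftarrow>xs. [:- a, 1:])"
    by (simp flip: prod_mset_prod_list)
  have "eigs M = rev (sort xs)"
    using M xs by (intro eigs_eqI) (simp_all add: perm)
  then show "length (eigs M) = n" and "sorted (rev (eigs M))"
    and "char_poly M = (\<Prod>a\<leftarrow>eigs M. [:- a, 1:])"
    using xs by (simp_all add: perm)
qed

lemma det_four_block_mat_swap:
  fixes A B C D :: "'a :: idom mat"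
  assumes A: "A \<in> carrier_mat n n" and B: "B \<in> carrier_mat n n"
    and C: "C \<in> carrier_mat n n" and D: "D \<in> carrier_mat n n"
  shows "det (four_block_mat D C B A) = det (four_block_mat A B C D)"
proof -
  let ?P = "four_block_mat (0\<^sub>m n n) (1\<^sub>m n) (1\<^sub>m n) (0\<^sub>m n n) :: 'a mat"
  let ?M = "four_block_mat A B C D"
  have P: "?P \<in> carrier_mat (n + n) (n + n)" and M: "?M \<in> carrier_mat (n + n) (n + n)"
    using A D by auto
  have "?P * ?P = 1\<^sub>m (n + n)"
    by (subst mult_four_block_mat) auto
  then have det_P: "det ?P * det ?P = 1"
    using det_mult[OF P P] by simp
  have "?P * ?M * ?P = four_block_mat D C B A"
    using A B C D by (subst mult_four_block_mat, auto)+
  then have "det (four_block_mat D C B A) = det ?P * det ?M * det ?P"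
    using det_mult[OF mult_carrier_mat[OF P M] P] det_mult[OF P M] by simp
  also have "\<dots> = det ?M"
    using det_P by (simp add: algebra_simps)
  finally show ?thesis .
qed

lemma poly_char_poly:
  fixes A :: "'a :: field mat"
  assumes A: "A \<in> carrier_mat n n"
  shows "poly (char_poly A) k = det (k \<cdot>\<^sub>m 1\<^sub>m n - A)"
proof -
  have "- char_matrix A k = k \<cdot>\<^sub>m 1\<^sub>m n - A"
    using A by (intro eq_matI) (auto simp: char_matrix_def)
  then show ?thesis using char_poly_matrix[OF A] by simp
qed

lemma char_poly_mult_commute:
  fixes X Y :: "'a :: field_char_0 mat"
  assumes X: "X \<in> carrier_mat n n" and Y: "Y \<in> carrier_mat n n"
  shows "char_poly (X * Y) = char_poly (Y * X)"
proof (rule poly_ext)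
  fix k :: 'a
  let ?K = "k \<cdot>\<^sub>m 1\<^sub>m n :: 'a mat"
  have K: "?K \<in> carrier_mat n n" by simp
  have "Y * ?K = ?K * Y"
    using Y by (simp add: mult_smult_distrib[OF Y one_carrier_mat] mult_smult_assoc_mat[OF one_carrier_mat Y])
  then have "det (four_block_mat (1\<^sub>m n) X Y ?K) = det (?K - X * Y)"
    using det_four_block_mat[OF one_carrier_mat X Y K] K by simp
  moreover have "det (four_block_mat ?K Y X (1\<^sub>m n)) = det (?K - Y * X)"
    using det_four_block_mat[OF K Y X one_carrier_mat] X K by simp
  ultimately have "det (?K - X * Y) = det (?K - Y * X)"
    using det_four_block_mat_swap[OF one_carrier_mat X Y K] by simp
  then show "poly (char_poly (X * Y)) k = poly (char_poly (Y * X)) k"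
    using X Y by (simp add: poly_char_poly[of _ n])
qed

lemma char_poly_four_block_diag:
  fixes B D :: "'a :: idom mat"
  assumes B: "B \<in> carrier_mat s s" and D: "D \<in> carrier_mat m m"
  shows "char_poly (four_block_mat B (0\<^sub>m s m) (0\<^sub>m m s) D) = char_poly B * char_poly D"
proof -
  let ?cm = "\<lambda>A. [:0, 1:] \<cdot>\<^sub>m 1\<^sub>m (dim_row A) + map_mat (\<lambda>a. [:- a:]) A"
  have "?cm (four_block_mat B (0\<^sub>m s m) (0\<^sub>m m s) D)
      = four_block_mat (?cm B) (0\<^sub>m s m) (0\<^sub>m m s) (?cm D)"
    using B D by (intro eq_matI) auto
  then show ?thesis
    using B D unfolding char_poly_defs
    by (simp add: det_four_block_mat_lower_left_zero[of _ s _ m])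
qed

lemma char_poly_zero_mat: "char_poly (0\<^sub>m m m :: 'a :: idom mat) = [:0, 1:] ^ m"
proof -
  have "diag_mat (0\<^sub>m m m :: 'a mat) = replicate m 0"
    by (rule nth_equalityI) (auto simp: diag_mat_def)
  then show ?thesis
    by (subst char_poly_upper_triangular[of _ m]) (auto simp: upper_triangular_def prod_list_replicate)
qed

lemma char_poly_mult_rect:
  fixes N P :: "'a :: field_char_0 mat"
  assumes N: "N \<in> carrier_mat n s" and P: "P \<in> carrier_mat s n" and sn: "s \<le> n"
  shows "char_poly (N * P) = char_poly (P * N) * [:0, 1:] ^ (n - s)"
proof -
  define m where "m = n - s"
  have n: "n = s + m" using sn by (simp add: m_def)
  define N' where "N' = four_block_mat N (0\<^sub>m n m) (0\<^sub>m 0 s) (0\<^sub>m 0 m)"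
  define P' where "P' = four_block_mat P (0\<^sub>m s 0) (0\<^sub>m m n) (0\<^sub>m m 0)"
  have N': "N' \<in> carrier_mat n n" and P': "P' \<in> carrier_mat n n"
    unfolding N'_def P'_def using N P n by auto
  have "N' * P' = N * P"
    unfolding N'_def P'_def using N P
    by (subst mult_four_block_mat[OF N _ _ _ P]) (auto intro!: eq_matI)
  moreover have "P' * N' = four_block_mat (P * N) (0\<^sub>m s m) (0\<^sub>m m s) (0\<^sub>m m m)"
    unfolding N'_def P'_def using N P
    by (subst mult_four_block_mat[OF P _ _ _ N]) auto
  moreover have "P * N \<in> carrier_mat s s" using P N by simp
  ultimately show ?thesis
    using char_poly_mult_commute[OF N' P']
    by (simp add: char_poly_four_block_diag char_poly_zero_mat m_def)
qed

lemma pick_inj_iff: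
  assumes "i < card S" and "j < card S"
  shows "pick S i = pick S j \<longleftrightarrow> i = j"
  using assms by (metis nat_neq_iff pick_mono_le)

lemma pick_less:
  assumes "S \<subseteq> {0..<n}" and "i < card S"
  shows "pick S i < n"
  using assms pick_in_set_le[of i S] by auto

lemma bij_betw_pick:
  assumes "finite S"
  shows "bij_betw (pick S) {..<card S} S"
proof -
  have inj: "inj_on (pick S) {..<card S}"
    by (intro inj_onI) (simp add: pick_inj_iff)
  have "pick S ` {..<card S} \<subseteq> S"
    using pick_in_set_le by auto
  moreover have "card (pick S ` {..<card S}) = card S"
    using card_image[OF inj] by simp
  ultimately show ?thesis
    using assms inj by (simp add: bij_betw_def card_subset_eq)
qed

lemma Collect_less_in_eq:
  "S \<subseteq> {0..<n} \<Longrightarrow> {i. i < n \<and> i \<in> S} = S"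
  by auto

lemma submatrix_UNIV_carrier_mat:
  assumes "A \<in> carrier_mat m n" and "S \<subseteq> {0..<n}"
  shows "submatrix A UNIV S \<in> carrier_mat m (card S)"
  using assms by (intro carrier_matI) (simp_all add: dim_submatrix Collect_less_in_eq)

lemma submatrix_transpose_mult:
  fixes A B :: "'a :: comm_semiring_0 mat"
  assumes A: "A \<in> carrier_mat m n" and B: "B \<in> carrier_mat m k"
  shows "submatrix (A\<^sup>T * B) I J = (submatrix A UNIV I)\<^sup>T * submatrix B UNIV J"
proof (rule eq_matI)
  fix i j
  assume "i < dim_row ((submatrix A UNIV I)\<^sup>T * submatrix B UNIV J)"
    and "j < dim_col ((submatrix A UNIV I)\<^sup>T * submatrix B UNIV J)"
  then have i: "i < card {a. a < n \<and> a \<in> I}" and j: "j < card {b. b < k \<and> b \<in> J}"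
    using A B by (simp_all add: dim_submatrix)
  then have "pick I i < n" and "pick J j < k"
    by (simp_all add: pick_le)
  then show "submatrix (A\<^sup>T * B) I J $$ (i, j)
      = ((submatrix A UNIV I)\<^sup>T * submatrix B UNIV J) $$ (i, j)"
    using A B i j
    by (auto simp: submatrix_index dim_submatrix scalar_prod_def pick_UNIV intro!: sum.cong)
qed (use A B in \<open>simp_all add: dim_submatrix\<close>)

lemma submatrix_UNIV_eq_mult:
  fixes A :: "'a :: semiring_1 mat"
  assumes A: "A \<in> carrier_mat m n"
  shows "submatrix A UNIV J = A * submatrix (1\<^sub>m n) UNIV J"
proof (rule eq_matI)
  fix i j
  assume "i < dim_row (A * submatrix (1\<^sub>m n) UNIV J)"
    and "j < dim_col (A * submatrix (1\<^sub>m n) UNIV J)"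
  then have i: "i < m" and j: "j < card {b. b < n \<and> b \<in> J}"
    using A by (simp_all add: dim_submatrix)
  then have "pick J j < n"
    by (simp add: pick_le)
  then show "submatrix A UNIV J $$ (i, j) = (A * submatrix (1\<^sub>m n) UNIV J) $$ (i, j)"
    using A i j
    by (simp add: submatrix_index dim_submatrix scalar_prod_def pick_UNIV sum.delta'
        if_distrib[of "\<lambda>x. _ * x"] cong: if_cong)
qed (use A in \<open>simp_all add: dim_submatrix\<close>)

lemma submatrix_eq_selection_mult:
  fixes A :: "'a :: comm_semiring_1 mat"
  assumes A: "A \<in> carrier_mat m n"
  shows "submatrix A I J = (submatrix (1\<^sub>m m) UNIV I)\<^sup>T * (A * submatrix (1\<^sub>m n) UNIV J)"
  using submatrix_transpose_mult[OF one_carrier_mat A, of I J] A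
  by (simp add: submatrix_UNIV_eq_mult)

lemma submatrix_one:
  assumes "S \<subseteq> {0..<n}"
  shows "submatrix (1\<^sub>m n) S S = 1\<^sub>m (card S)"
  using assms pick_less[OF assms]
  by (intro eq_matI) (auto simp: submatrix_index dim_submatrix Collect_less_in_eq pick_inj_iff)

lemma selection_mat_orthonormal:
  assumes "S \<subseteq> {0..<n}"
  shows "(submatrix (1\<^sub>m n) UNIV S)\<^sup>T * submatrix (1\<^sub>m n) UNIV S
    = (1\<^sub>m (card S) :: 'a :: comm_semiring_1 mat)"
proof -
  have "(submatrix (1\<^sub>m n) UNIV S)\<^sup>T * submatrix (1\<^sub>m n) UNIV S
      = submatrix ((1\<^sub>m n)\<^sup>T * 1\<^sub>m n :: 'a mat) S S"
    by (rule submatrix_transpose_mult[symmetric]) auto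
  also have "\<dots> = 1\<^sub>m (card S)"
    using assms by (simp add: submatrix_one)
  finally show ?thesis .
qed

lemma submatrix_minus_smult_one:
  fixes X :: "'a :: ring_1 mat"
  assumes X: "X \<in> carrier_mat n n" and S: "S \<subseteq> {0..<n}"
  shows "submatrix (X - t \<cdot>\<^sub>m 1\<^sub>m n) S S = submatrix X S S - t \<cdot>\<^sub>m 1\<^sub>m (card S)"
  using X S pick_less[OF S]
  by (intro eq_matI) (auto simp: submatrix_index dim_submatrix Collect_less_in_eq pick_inj_iff)

lemma pos_def_mat_congruence:
  assumes pd: "pos_def_mat n C" and E: "E \<in> carrier_mat n k" and EE: "E\<^sup>T * E = 1\<^sub>m k"
  shows "pos_def_mat k (E\<^sup>T * (C * E))"
proof -
  have C: "C \<in> carrier_mat n n" and sym: "C\<^sup>T = C"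
    and pos: "\<And>v. v \<in> carrier_vec n \<Longrightarrow> v \<noteq> 0\<^sub>v n \<Longrightarrow> v \<bullet> (C *\<^sub>v v) > 0"
    using pd unfolding pos_def_mat_def sym_mat_def by auto
  have "w \<bullet> (E\<^sup>T * (C * E) *\<^sub>v w) > 0"
    if w: "w \<in> carrier_vec k" "w \<noteq> 0\<^sub>v k" for w
  proof -
    have u: "E *\<^sub>v w \<in> carrier_vec n" using E w by simp
    have "E\<^sup>T *\<^sub>v (E *\<^sub>v w) = w"
      using E w EE by (simp flip: assoc_mult_mat_vec)
    moreover have "E\<^sup>T *\<^sub>v 0\<^sub>v n = 0\<^sub>v k"
      using E by (intro eq_vecI) auto
    ultimately have u0: "E *\<^sub>v w \<noteq> 0\<^sub>v n"
      using w by metis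
    have "w \<bullet> (E\<^sup>T * (C * E) *\<^sub>v w) = (E\<^sup>T *\<^sub>v (C *\<^sub>v (E *\<^sub>v w))) \<bullet> w"
      using C E w by (simp add: assoc_mult_mat_vec[OF _ _ w(1)] comm_scalar_prod[of w k])
    also have "\<dots> = (C *\<^sub>v (E *\<^sub>v w)) \<bullet> (E *\<^sub>v w)"
      using C E w by (intro transpose_vec_mult_scalar) auto
    also have "\<dots> = (E *\<^sub>v w) \<bullet> (C *\<^sub>v (E *\<^sub>v w))"
      using C E w by (intro comm_scalar_prod[of _ n]) auto
    finally show ?thesis using pos[OF u u0] by simp
  qed
  moreover have "(E\<^sup>T * (C * E))\<^sup>T = E\<^sup>T * C\<^sup>T * E"
    using C E by (simp add: transpose_mult[of _ k n _ k] transpose_mult[of _ n n _ k])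
  ultimately show ?thesis
    using C E sym unfolding pos_def_mat_def sym_mat_def by (auto simp: assoc_mult_mat[of _ k n _ n _ k])
qed

lemma pos_def_submatrix:
  assumes pd: "pos_def_mat n C" and S: "S \<subseteq> {0..<n}"
  shows "pos_def_mat (card S) (submatrix C S S)"
proof -
  have "C \<in> carrier_mat n n"
    using pd unfolding pos_def_mat_def by simp
  then show ?thesis
    using pos_def_mat_congruence[OF pd submatrix_UNIV_carrier_mat[OF one_carrier_mat S]
        selection_mat_orthonormal[OF S]]
    by (simp add: submatrix_eq_selection_mult)
qed

lemma sym_mat_transpose_mult:
  assumes "N \<in> carrier_mat n s"
  shows "sym_mat (N\<^sup>T * N)"
  using assms by (simp add: sym_mat_def transpose_mult[of _ s n])

lemma eigs_transpose_mult_nonneg: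
  fixes N :: "real mat"
  assumes N: "N \<in> carrier_mat n s" and a: "a \<in> set (eigs (N\<^sup>T * N))"
  shows "a \<ge> 0"
proof -
  have G: "N\<^sup>T * N \<in> carrier_mat s s"
    using N by simp
  note sym = sym_mat_transpose_mult[OF N]
  have "poly (char_poly (N\<^sup>T * N)) a = 0"
    using a by (simp add: eigs_sym_mat(3)[OF G sym] poly_prod_list prod_list_zero_iff)
  then have "eigenvalue (N\<^sup>T * N) a"
    using eigenvalue_root_char_poly[OF G] by simp
  moreover have "dim_row (N\<^sup>T * N) = s"
    using N by simp
  ultimately obtain w where w: "w \<in> carrier_vec s" "w \<noteq> 0\<^sub>v s"
    and Gw: "N\<^sup>T * N *\<^sub>v w = a \<cdot>\<^sub>v w"
    unfolding eigenvalue_def eigenvector_def by metis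
  have "N\<^sup>T *\<^sub>v (N *\<^sub>v w) = a \<cdot>\<^sub>v w"
    using Gw N w by (simp add: assoc_mult_mat_vec[of _ s n])
  then have "a * (w \<bullet> w) = (N\<^sup>T *\<^sub>v (N *\<^sub>v w)) \<bullet> w"
    using w by simp
  also have "\<dots> = (N *\<^sub>v w) \<bullet> (N *\<^sub>v w)"
    using N w by (simp add: transpose_vec_mult_scalar[of _ n s])
  finally have "a * (w \<bullet> w) \<ge> 0"
    by (simp add: scalar_prod_def sum_nonneg)
  moreover have "w \<bullet> w > 0"
    using conjugate_square_greater_0_vec[OF w(1)] w(2) by simp
  ultimately show ?thesis
    by (simp add: zero_le_mult_iff)
qed

lemma eigs_mult_transpose:
  fixes N :: "real mat"
  assumes N: "N \<in> carrier_mat n s" and sn: "s \<le> n"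
  shows "eigs (N * N\<^sup>T) = eigs (N\<^sup>T * N) @ replicate (n - s) 0"
proof (rule eigs_eqI)
  have G: "N\<^sup>T * N \<in> carrier_mat s s"
    using N by simp
  note eigs_G = eigs_sym_mat[OF G sym_mat_transpose_mult[OF N]]
  show "length (eigs (N\<^sup>T * N) @ replicate (n - s) 0) = dim_row (N * N\<^sup>T)"
    using N sn eigs_G(1) by simp
  show "sorted (rev (eigs (N\<^sup>T * N) @ replicate (n - s) 0))"
    using eigs_G(2) eigs_transpose_mult_nonneg[OF N] by (simp add: sorted_append)
  show "char_poly (N * N\<^sup>T) = (\<Prod>a\<leftarrow>eigs (N\<^sup>T * N) @ replicate (n - s) 0. [:- a, 1:])"
  proof -
    have "N\<^sup>T \<in> carrier_mat s n" using N by simp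
    from char_poly_mult_rect[OF N this sn] show ?thesis
      by (simp add: eigs_G(3) prod_list_replicate)
  qed
qed

lemma det_add_smult_one:
  fixes X :: "'a :: field mat"
  assumes X: "X \<in> carrier_mat n n" and len: "length xs = n"
    and cp: "char_poly X = (\<Prod>a\<leftarrow>xs. [:- a, 1:])"
  shows "det (X + t \<cdot>\<^sub>m 1\<^sub>m n) = (\<Prod>a\<leftarrow>xs. a + t)"
proof -
  have "(- t) \<cdot>\<^sub>m 1\<^sub>m n - X = (- 1) \<cdot>\<^sub>m (X + t \<cdot>\<^sub>m 1\<^sub>m n)"
    using X by (intro eq_matI) auto
  then have "poly (char_poly X) (- t) = (- 1) ^ n * det (X + t \<cdot>\<^sub>m 1\<^sub>m n)"
    using X by (simp add: poly_char_poly[OF X])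
  moreover have "poly (char_poly X) (- t) = (- 1) ^ n * (\<Prod>a\<leftarrow>xs. a + t)"
    unfolding cp len[symmetric] by (induction xs) (simp_all add: poly_prod_list algebra_simps)
  ultimately show ?thesis by simp
qed

lemma pos_def_mat_det_nonzero:
  assumes "pos_def_mat n C"
  shows "det C \<noteq> 0"
proof
  assume "det C = 0"
  then obtain v where v: "v \<in> carrier_vec n" "v \<noteq> 0\<^sub>v n" "C *\<^sub>v v = 0\<^sub>v n"
    using assms det_0_iff_vec_prod_zero[of C n] unfolding pos_def_mat_def by auto
  have "v \<bullet> (C *\<^sub>v v) > 0"
    using assms v unfolding pos_def_mat_def by blast
  then show False
    using v by simp
qed

lemma Phi_eq_ln_det:
  fixes G :: "real mat"
  assumes G: "G \<in> carrier_mat s s" and sym: "sym_mat G"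
    and det: "det (G + t \<cdot>\<^sub>m 1\<^sub>m s) \<noteq> 0"
  shows "Phi s G t = ln (det (G + t \<cdot>\<^sub>m 1\<^sub>m s))"
proof -
  note eigs_G = eigs_sym_mat[OF G sym]
  have "det (G + t \<cdot>\<^sub>m 1\<^sub>m s) = (\<Prod>a\<leftarrow>eigs G. a + t)"
    using det_add_smult_one[OF G eigs_G(1,3)] .
  also have "\<dots> = (\<Prod>i<s. eigs G ! i + t)"
    using eigs_G(1) by (simp add: prod.list_conv_set_nth atLeast0LessThan)
  finally have prod: "det (G + t \<cdot>\<^sub>m 1\<^sub>m s) = (\<Prod>i<s. eigs G ! i + t)" .
  with det have "eigs G ! i + t \<noteq> 0" if "i \<in> {..<s}" for i
    using that by simp
  with prod show ?thesis
    unfolding Phi_def using ln_prod[of "{..<s}" "\<lambda>i. eigs G ! i + t"] by simp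
qed

definition indicator_vec :: "nat \<Rightarrow> nat set \<Rightarrow> real vec" where
  "indicator_vec n S = vec n (\<lambda>i. of_bool (i \<in> S))"

lemma Mmat_indicator_vec:
  assumes A: "A \<in> carrier_mat n n" and S: "S \<subseteq> {0..<n}"
  shows "Mmat n A (indicator_vec n S) = submatrix A UNIV S * (submatrix A UNIV S)\<^sup>T"
proof (rule eq_matI)
  let ?N = "submatrix A UNIV S"
  have N: "?N \<in> carrier_mat n (card S)"
    using submatrix_UNIV_carrier_mat[OF A S] .
  have fin: "finite S"
    using S finite_subset by blast
  fix j k
  assume "j < dim_row (?N * ?N\<^sup>T)" and "k < dim_col (?N * ?N\<^sup>T)"
  then have j: "j < n" and k: "k < n"
    using N by simp_all
  have "Mmat n A (indicator_vec n S) $$ (j, k) = (\<Sum>i\<in>S. A $$ (j, i) * A $$ (k, i))"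
    using A S j k unfolding Mmat_def indicator_vec_def
    by (simp, intro sum.mono_neutral_cong_right) auto
  also have "\<dots> = (\<Sum>l<card S. A $$ (j, pick S l) * A $$ (k, pick S l))"
    by (rule sum.reindex_bij_betw[OF bij_betw_pick[OF fin], symmetric])
  also have "\<dots> = (?N * ?N\<^sup>T) $$ (j, k)"
    using N A S j k
    by (simp add: scalar_prod_def submatrix_index dim_submatrix pick_UNIV Collect_less_in_eq atLeast0LessThan)
  finally show "Mmat n A (indicator_vec n S) $$ (j, k) = (?N * ?N\<^sup>T) $$ (j, k)" .
qed (use A S submatrix_UNIV_carrier_mat[OF A S] in \<open>simp_all add: Mmat_def\<close>)

lemma Phi_Mmat_indicator_vec:
  assumes pd: "pos_def_mat n C" and chol: "cholesky_factor n (C - t \<cdot>\<^sub>m 1\<^sub>m n) A"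
    and S: "S \<subseteq> {0..<n}"
  shows "Phi (card S) (Mmat n A (indicator_vec n S)) t = ln (det (submatrix C S S))"
proof -
  let ?s = "card S" and ?N = "submatrix A UNIV S"
  have C: "C \<in> carrier_mat n n" and A: "A \<in> carrier_mat n n"
    and K: "C - t \<cdot>\<^sub>m 1\<^sub>m n = A\<^sup>T * A"
    using pd chol unfolding pos_def_mat_def cholesky_factor_def by auto
  have N: "?N \<in> carrier_mat n ?s"
    using submatrix_UNIV_carrier_mat[OF A S] .
  have sn: "?s \<le> n"
    using S card_mono[of "{0..<n}" S] by simp
  have G: "?N\<^sup>T * ?N \<in> carrier_mat ?s ?s"
    using N by simp
  note sym = sym_mat_transpose_mult[OF N]
  have "?N\<^sup>T * ?N = submatrix (C - t \<cdot>\<^sub>m 1\<^sub>m n) S S"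
    using submatrix_transpose_mult[OF A A] by (simp add: K)
  also have "\<dots> = submatrix C S S - t \<cdot>\<^sub>m 1\<^sub>m ?s"
    using submatrix_minus_smult_one[OF C S] .
  finally have CS: "submatrix C S S = ?N\<^sup>T * ?N + t \<cdot>\<^sub>m 1\<^sub>m ?s"
    using G pos_def_submatrix[OF pd S] unfolding pos_def_mat_def by (intro eq_matI) auto
  have "Phi ?s (Mmat n A (indicator_vec n S)) t = Phi ?s (?N\<^sup>T * ?N) t"
    using eigs_mult_transpose[OF N sn] eigs_sym_mat(1)[OF G sym]
    by (simp add: Mmat_indicator_vec[OF A S] Phi_def nth_append)
  also have "\<dots> = ln (det (submatrix C S S))"
    using Phi_eq_ln_det[OF G sym] pos_def_mat_det_nonzero[OF pos_def_submatrix[OF pd S]]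
    by (simp add: CS)
  finally show ?thesis .
qed

lemma binary_vecs_eq_indicator_vecs:
  "{x \<in> carrier_vec n. (\<forall>i<n. x $ i \<in> {0, 1}) \<and> (\<Sum>i<n. x $ i) = real s}
    = indicator_vec n ` {S. S \<subseteq> {0..<n} \<and> card S = s}"
proof (intro equalityI subsetI)
  have sum_indicator: "(\<Sum>i<n. indicator_vec n S $ i) = real (card S)" if "S \<subseteq> {0..<n}" for S
    using that by (simp add: indicator_vec_def sum_of_bool_eq Int_absorb1 atLeast0LessThan)
  fix x
  show "x \<in> {x \<in> carrier_vec n. (\<forall>i<n. x $ i \<in> {0, 1}) \<and> (\<Sum>i<n. x $ i) = real s}"
    if "x \<in> indicator_vec n ` {S. S \<subseteq> {0..<n} \<and> card S = s}"
    using that sum_indicator by (auto simp: indicator_vec_def)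
  assume "x \<in> {x \<in> carrier_vec n. (\<forall>i<n. x $ i \<in> {0, 1}) \<and> (\<Sum>i<n. x $ i) = real s}"
  then have x: "x \<in> carrier_vec n" "\<forall>i<n. x $ i \<in> {0, 1}" "(\<Sum>i<n. x $ i) = real s"
    by auto
  define S where "S = {i. i < n \<and> x $ i = 1}"
  have S: "S \<subseteq> {0..<n}"
    by (auto simp: S_def)
  have "x = indicator_vec n S"
    using x(1,2) by (intro eq_vecI) (auto simp: indicator_vec_def S_def)
  moreover have "card S = s"
    using sum_indicator[OF S] x(3) by (simp add: \<open>x = indicator_vec n S\<close> [symmetric])
  ultimately show "x \<in> indicator_vec n ` {S. S \<subseteq> {0..<n} \<and> card S = s}"
    using S by blast
qed

theorem proposition1:
  fixes n s :: nat and C A :: "real mat" and t :: real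
  assumes "n \<ge> 1" and "1 \<le> s" and "s \<le> n"
    and "pos_def_mat n C"
    and "0 \<le> t" and "t \<le> lambda_min C"
    and "cholesky_factor n (C - t \<cdot>\<^sub>m 1\<^sub>m n) A"
  shows "Max {ln (det (submatrix C S S)) | S. S \<subseteq> {0..<n} \<and> card S = s}
       = Max {Phi s (Mmat n A x) t | x. x \<in> carrier_vec n \<and> (\<forall>i<n. x $ i \<in> {0, 1})
                                         \<and> (\<Sum>i<n. x $ i) = s}"
proof -
  let ?subsets = "{S. S \<subseteq> {0..<n} \<and> card S = s}"
  have "{ln (det (submatrix C S S)) | S. S \<subseteq> {0..<n} \<and> card S = s}
      = (\<lambda>S. ln (det (submatrix C S S))) ` ?subsets"
    by blast
  also have "\<dots> = (\<lambda>S. Phi s (Mmat n A (indicator_vec n S)) t) ` ?subsets"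
    using Phi_Mmat_indicator_vec[OF assms(4,7)] by (intro image_cong) auto
  also have "\<dots> = (\<lambda>x. Phi s (Mmat n A x) t) ` indicator_vec n ` ?subsets"
    by (simp add: image_image)
  also have "\<dots> = {Phi s (Mmat n A x) t | x. x \<in> carrier_vec n \<and> (\<forall>i<n. x $ i \<in> {0, 1})
                                         \<and> (\<Sum>i<n. x $ i) = s}"
    by (auto simp flip: binary_vecs_eq_indicator_vecs)
  finally show ?thesis by simp
qed

end
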